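(* Let $\hat c\in\mathcal C$ satisfy the out-of-sample guarantee with speed $(a_T)$, where $(a_T)$ is any sequence of positive reals with $a_T\to\infty$. Then for all $\mathbb P\in\mathcal P^o$ and $x\in\mathcal X$, $\liminf_{T\to\infty}\big(\hat c(x,\mathbb P,T)-c(x,\mathbb P)\big)\ge0$.
   Context: Setting: $\Sigma=\{1,\dots,d\}$ ($d\ge2$) is finite; $\mathcal P\subset\mathbb R^d$ is the probability simplex over $\Sigma$ and $\mathcal P^o$ its relative interior (all entries positive). $\mathcal X\subset\mathbb R^n$ is compact and $\ell:\mathcal X\times\Sigma\to\mathbb R$ is continuous in $x$ for each $i$. For $x\in\mathcal X$, $\mu\in\mathbb R^d$ let $c(x,\mu)=\sum_{i\in\Sigma}\ell(x,i)\mu(i)$. Data $\xi_1,\xi_2,\dots$ are i.i.d. with law $\mathbb P\in\mathcal P$, $\mathbb P^\infty$ denotes their joint law, and $\hat{\mathbb P}_T(i)=\frac1T\sum_{t=1}^T\mathbf 1\{\xi_t=i\}$. A predictor is a sequence $\hat c=(\hat c(\cdot,\cdot,T))_{T\in\mathbb N}$ of functions $\mathcal X\times\mathcal P\to\mathbb R$. It is regular, written $\hat c\in\mathcal C$, if (i) the sequence $(\hat c(\cdot,\cdot,T))_T$ is uniformly bounded and equicontinuous on $\mathcal X\times\mathcal P$, and (ii) each $\hat c(x,\cdot,T)$ is differentiable in $\mathbb P$ and the sequence of derivative maps $(x,\mathbb P)\mapsto\nabla_{\mathbb P}\hat c(x,\mathbb P,T)$ is uniformly bounded and equicontinuous. (A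 sequence $(f_T)$ is equicontinuous if for every point $y$ and $\varepsilon>0$ there is a neighbourhood $U$ of $y$ with $|f_T(y)-f_T(z)|<\varepsilon$ for all $z\in U$ and all $T$.) Out-of-sample guarantee with speed $(a_T)$: for all $x\in\mathcal X$ and $\mathbb P\in\mathcal P^o$, $\limsup_{T\to\infty}\frac1{a_T}\log\mathbb P^\infty\big(c(x,\mathbb P)>\hat c(x,\hat{\mathbb P}_T,T)\big)\le-1$. *)

theory Defs
  imports "HOL-Probability.Probability"
begin

definition prob_simplex :: "(real^'d) set" where
  "prob_simplex = {p. (\<forall>i. 0 \<le> p $ i) \<and> (\<Sum>i\<in>UNIV. p $ i) = 1}"

definition prob_simplex_ri :: "(real^'d) set" where
  "prob_simplex_ri = {p. (\<forall>i. 0 < p $ i) \<and> (\<Sum>i\<in>UNIV. p $ i) = 1}"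

definition cost :: "('x \<Rightarrow> 'd::finite \<Rightarrow> real) \<Rightarrow> 'x \<Rightarrow> real^'d \<Rightarrow> real" where
  "cost l x \<mu> = (\<Sum>i\<in>UNIV. l x i * \<mu> $ i)"

definition law :: "real^'d \<Rightarrow> 'd::finite measure" where
  "law P = point_measure UNIV (\<lambda>i. ennreal (P $ i))"

text \<open>Empirical distribution of xi_1..xi_T, where xi_t = omega !! (t-1).\<close>
definition empirical :: "'d::finite stream \<Rightarrow> nat \<Rightarrow> real^'d" where
  "empirical \<omega> T = (\<chi> i. real (card {t. t < T \<and> \<omega> !! t = i}) / real T)"

definition regular_predictor ::
  "'x::metric_space set \<Rightarrow> ('x \<Rightarrow> real^'d \<Rightarrow> nat \<Rightarrow> real) \<Rightarrow> bool" where
  "regular_predictor X ch \<longleftrightarrow>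
     (\<exists>B. \<forall>T\<ge>1. \<forall>x\<in>X. \<forall>p\<in>prob_simplex. \<bar>ch x p T\<bar> \<le> B) \<and>
     (\<forall>x\<in>X. \<forall>p\<in>prob_simplex. \<forall>\<epsilon>>0. \<exists>\<delta>>0. \<forall>x'\<in>X. \<forall>p'\<in>prob_simplex.
        dist (x', p') (x, p) < \<delta> \<longrightarrow> (\<forall>T\<ge>1. \<bar>ch x p T - ch x' p' T\<bar> < \<epsilon>)) \<and>
     (\<exists>D :: 'x \<Rightarrow> real^'d \<Rightarrow> nat \<Rightarrow> real^'d.
        (\<forall>T\<ge>1. \<forall>x\<in>X. \<forall>p\<in>prob_simplex.
           ((\<lambda>q. ch x q T) has_derivative (\<lambda>h. D x p T \<bullet> h)) (at p within prob_simplex)) \<and>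
        (\<exists>B. \<forall>T\<ge>1. \<forall>x\<in>X. \<forall>p\<in>prob_simplex. norm (D x p T) \<le> B) \<and>
        (\<forall>x\<in>X. \<forall>p\<in>prob_simplex. \<forall>\<epsilon>>0. \<exists>\<delta>>0. \<forall>x'\<in>X. \<forall>p'\<in>prob_simplex.
           dist (x', p') (x, p) < \<delta> \<longrightarrow> (\<forall>T\<ge>1. dist (D x p T) (D x' p' T) < \<epsilon>)))"

definition disappointment_prob ::
  "('x \<Rightarrow> 'd::finite \<Rightarrow> real) \<Rightarrow> ('x \<Rightarrow> real^'d \<Rightarrow> nat \<Rightarrow> real) \<Rightarrow> 'x \<Rightarrow> real^'d \<Rightarrow> nat \<Rightarrow> real" where
  "disappointment_prob l ch x P T =
     measure (stream_space (law P))
       {\<omega> \<in> space (stream_space (law P)). cost l x P > ch x (empirical \<omega> T) T}"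

definition scaled_log :: "real \<Rightarrow> real \<Rightarrow> ereal" where
  "scaled_log a q = (if q = 0 then -\<infinity> else ereal (ln q / a))"

definition out_of_sample_guarantee ::
  "'x set \<Rightarrow> ('x \<Rightarrow> 'd::finite \<Rightarrow> real) \<Rightarrow> ('x \<Rightarrow> real^'d \<Rightarrow> nat \<Rightarrow> real) \<Rightarrow> (nat \<Rightarrow> real) \<Rightarrow> bool" where
  "out_of_sample_guarantee X l ch a \<longleftrightarrow>
     (\<forall>x\<in>X. \<forall>P\<in>prob_simplex_ri.
        limsup (\<lambda>T. scaled_log (a T) (disappointment_prob l ch x P T)) \<le> -1)"

end

theory Submission
  imports Defs "HOL-Real_Asymp.Real_Asymp"
begin

(* A guarantee with speed a_T \<rightarrow> \<infinity> forces the disappointment probability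
   P(c(x,P) > ch(x, empirical_T, T)) to tend to 0. On the other hand, by Hoeffding's inequality
   the empirical distribution lies in any neighbourhood of P with probability tending to 1, and
   equicontinuity of the predictor (uniformly in T) turns this neighbourhood into one on which
   ch(x,\<cdot>,T) is within \<epsilon> of ch(x,P,T). So if ch(x,P,T) \<le> c(x,P) - \<epsilon> for infinitely many T,
   the disappointment probability would be close to 1 for those T, a contradiction. *)

lemma sets_law [simp]: "sets (law P) = UNIV" and space_law [simp]: "space (law P) = UNIV"
  by (auto simp: law_def sets_point_measure space_point_measure)

lemma prob_space_law:
  assumes "P \<in> prob_simplex"
  shows "prob_space (law P)"
proof
  have "emeasure (law P) (space (law P)) = (\<Sum>i\<in>UNIV. ennreal (P $ i))"
    unfolding law_def by (simp add: emeasure_point_measure_finite space_point_measure)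
  also have "\<dots> = ennreal (\<Sum>i\<in>UNIV. P $ i)"
    using assms by (intro sum_ennreal) (auto simp: prob_simplex_def)
  finally show "emeasure (law P) (space (law P)) = 1"
    using assms by (simp add: prob_simplex_def)
qed

lemma measure_law_singleton:
  assumes "P \<in> prob_simplex"
  shows "measure (law P) {i} = P $ i"
  using assms unfolding law_def
  by (simp add: measure_def emeasure_point_measure_finite prob_simplex_def)

lemma empirical_eq_frequencies_of_stake:
  "empirical \<omega> T = (\<chi> i. real (length (filter (\<lambda>y. y = i) (stake T \<omega>))) / real T)"
  unfolding empirical_def length_filter_conv_card by (simp add: conj_commute cong: conj_cong)

lemma measurable_empirical:
  assumes "sets M = sets (count_space UNIV)"
  shows "(\<lambda>\<omega>. empirical \<omega> T) \<in> stream_space M \<rightarrow>\<^sub>M count_space UNIV"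
proof -
  have "stake T \<in> stream_space M \<rightarrow>\<^sub>M count_space (UNIV :: 'a::finite list set)"
    using measurable_stake by (simp add: measurable_cong_sets[OF sets_stream_space_cong[OF assms] refl])
  then show ?thesis
    unfolding empirical_eq_frequencies_of_stake by (rule measurable_compose) simp
qed

lemma sets_empirical_event:
  "{\<omega> \<in> space (stream_space (law P)). Q (empirical \<omega> T)} \<in> sets (stream_space (law P))"
proof -
  have "(\<lambda>\<omega>. empirical \<omega> T) -` {p. Q p} \<inter> space (stream_space (law P)) \<in> sets (stream_space (law P))"
    by (rule measurable_sets[OF measurable_empirical]) auto
  then show ?thesis by (simp add: vimage_def Int_def conj_commute)
qed

lemma empirical_nth:
  "empirical \<omega> T $ i = (\<Sum>t<T. indicator {i} (\<omega> !! t)) / real T"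
proof -
  have "{t. t < T \<and> \<omega> !! t = i} = {..<T} \<inter> {t. \<omega> !! t = i}" by auto
  then show ?thesis
    by (simp add: empirical_def sum.inter_restrict[symmetric] indicator_def)
qed

lemma empirical_in_prob_simplex:
  assumes "T \<ge> 1"
  shows "empirical \<omega> T \<in> prob_simplex"
proof -
  have "(\<Sum>i\<in>UNIV. \<Sum>t<T. indicator {i} (\<omega> !! t) :: real) = (\<Sum>t<T. \<Sum>i\<in>UNIV. indicator {i} (\<omega> !! t))"
    by (rule sum.swap)
  also have "\<dots> = real T"
    by (simp add: indicator_def)
  finally show ?thesis
    using assms unfolding prob_simplex_def
    by (auto simp: empirical_nth sum_divide_distrib[symmetric] intro!: divide_nonneg_nonneg sum_nonneg)
qed

lemma (in prob_space) indep_vars_PiM_coordinates: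
  assumes "finite I" "I \<noteq> {}"
  shows "prob_space.indep_vars (\<Pi>\<^sub>M t\<in>UNIV. M) (\<lambda>_. M) (\<lambda>t \<omega>. \<omega> t) I"
proof -
  interpret PS: product_prob_space "\<lambda>_::'i. M" UNIV ..
  have "distr (\<Pi>\<^sub>M t\<in>UNIV. M) (\<Pi>\<^sub>M t\<in>I. M) (\<lambda>\<omega>. \<lambda>t\<in>I. \<omega> t) = (\<Pi>\<^sub>M t\<in>I. M)"
    using PS.distr_PiM_restrict_finite[OF assms(1)] by (simp add: restrict_def)
  also have "\<dots> = (\<Pi>\<^sub>M t\<in>I. distr (\<Pi>\<^sub>M t\<in>UNIV. M) M (\<lambda>\<omega>. \<omega> t))"
    by (intro PiM_cong refl) (simp add: PS.PiM_component)
  finally show ?thesis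
    by (subst PS.indep_vars_iff_distr_eq_PiM'[OF assms(2)]) auto
qed

lemma (in prob_space) PiM_frequency_deviation:
  assumes A: "A \<in> sets M" and "T \<ge> 1" "\<eta> \<ge> 0"
  shows "measure (\<Pi>\<^sub>M t\<in>UNIV. M)
     {\<omega> \<in> space (\<Pi>\<^sub>M t\<in>UNIV. M). \<eta> \<le> \<bar>(\<Sum>t<T. indicator A (\<omega> t)) / real T - prob A\<bar>}
     \<le> 2 * exp (-2 * real T * \<eta>\<^sup>2)"
proof -
  let ?M = "\<Pi>\<^sub>M t\<in>(UNIV::nat set). M"
  interpret PS: product_prob_space "\<lambda>_::nat. M" UNIV ..
  have nonempty: "{..<T} \<noteq> {}"
    using assms(2) by (simp add: lessThan_empty_iff)
  have distr_indicator: "distr ?M borel (\<lambda>\<omega>. indicator A (\<omega> t)) = distr M borel (indicator A)" for t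
    using distr_distr[of "indicator A" M borel "\<lambda>\<omega>. \<omega> t" ?M] A PS.PiM_component[of t]
    by (simp add: comp_def eq_commute)
  have expectation: "PS.P.expectation (\<lambda>\<omega>. indicator A (\<omega> 0)) = prob A"
    using integral_distr[of "\<lambda>\<omega>. \<omega> 0" ?M M "indicator A :: _ \<Rightarrow> real"] A PS.PiM_component[of 0]
    by (simp add: Int_absorb2)
  interpret H: Hoeffding_ineq_iid ?M "{..<T}" "\<lambda>t \<omega>. indicator A (\<omega> t)"
     "\<lambda>\<omega>. indicator A (\<omega> 0)" 0 1 "PS.P.expectation (\<lambda>\<omega>. indicator A (\<omega> 0))"
  proof unfold_locales
    show "prob_space.indep_vars ?M (\<lambda>_. borel) (\<lambda>t \<omega>. indicator A (\<omega> t)) {..<T}"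
      using PS.indep_vars_compose2[OF indep_vars_PiM_coordinates[OF _ nonempty],
          of "\<lambda>_. indicator A" "\<lambda>_. borel"] A by simp
  qed (use A in \<open>auto simp: distr_indicator\<close>)
  show ?thesis
    using H.Hoeffding_ineq_abs_ge'[OF assms(3)] nonempty by (simp add: expectation H.\<mu>_def)
qed

lemma (in prob_space) stream_frequency_deviation:
  assumes A[measurable]: "A \<in> sets M" and "T \<ge> 1" "\<eta> \<ge> 0"
  shows "measure (stream_space M)
     {\<omega> \<in> space (stream_space M). \<eta> \<le> \<bar>(\<Sum>t<T. indicator A (\<omega> !! t)) / real T - prob A\<bar>}
     \<le> 2 * exp (-2 * real T * \<eta>\<^sup>2)"
  (is "measure _ ?E \<le> _")
proof -
  let ?M = "\<Pi>\<^sub>M t\<in>(UNIV::nat set). M"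
  have "?E \<in> sets (stream_space M)"
    by measurable
  then have "measure (stream_space M) ?E = measure ?M (to_stream -` ?E \<inter> space ?M)"
    by (subst stream_space_eq_distr) (rule measure_distr, auto)
  also have "to_stream -` ?E \<inter> space ?M =
      {\<omega> \<in> space ?M. \<eta> \<le> \<bar>(\<Sum>t<T. indicator A (\<omega> t)) / real T - prob A\<bar>}"
    using measurable_space[OF measurable_to_stream[of M]] by (auto simp: to_stream_def)
  also have "measure ?M \<dots> \<le> 2 * exp (-2 * real T * \<eta>\<^sup>2)"
    by (rule PiM_frequency_deviation[OF assms])
  finally show ?thesis .
qed

lemma empirical_concentration:
  fixes P :: "real^'d::finite"
  assumes P: "P \<in> prob_simplex" and "\<eta> > 0"
  shows "(\<lambda>T. measure (stream_space (law P))
           {\<omega> \<in> space (stream_space (law P)). \<forall>i. \<bar>empirical \<omega> T $ i - P $ i\<bar> < \<eta>}) \<longlonglongrightarrow> 1"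
proof (rule tendsto_sandwich)
  let ?S = "stream_space (law P)"
  let ?bound = "\<lambda>T. 1 - real CARD('d) * (2 * exp (-2 * real T * \<eta>\<^sup>2))"
  interpret L: prob_space "law P"
    using P by (rule prob_space_law)
  interpret S: prob_space ?S
    by (rule L.prob_space_stream_space)
  show "?bound \<longlonglongrightarrow> 1"
    using \<open>\<eta> > 0\<close> by real_asymp
  show "\<forall>\<^sub>F T in sequentially. S.prob {\<omega> \<in> space ?S. \<forall>i. \<bar>empirical \<omega> T $ i - P $ i\<bar> < \<eta>} \<le> 1"
    by simp
  show "\<forall>\<^sub>F T in sequentially. ?bound T \<le> S.prob {\<omega> \<in> space ?S. \<forall>i. \<bar>empirical \<omega> T $ i - P $ i\<bar> < \<eta>}"
    using eventually_ge_at_top[of 1]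
  proof eventually_elim
    case (elim T)
    define bad where "bad i = {\<omega> \<in> space ?S. \<eta> \<le> \<bar>empirical \<omega> T $ i - P $ i\<bar>}" for i
    have bad_sets: "bad i \<in> S.events" for i
      unfolding bad_def by (rule sets_empirical_event)
    have "S.prob (\<Union>i. bad i) \<le> (\<Sum>i\<in>UNIV. S.prob (bad i))"
      using bad_sets by (intro S.finite_measure_subadditive_finite) auto
    also have "\<dots> \<le> (\<Sum>i\<in>(UNIV::'d set). 2 * exp (-2 * real T * \<eta>\<^sup>2))"
      using L.stream_frequency_deviation[of "{i}" T \<eta> for i] elim \<open>\<eta> > 0\<close> P
      by (intro sum_mono) (simp add: bad_def empirical_nth measure_law_singleton)
    finally have "?bound T \<le> 1 - S.prob (\<Union>i. bad i)"
      by simp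
    also have "\<dots> = S.prob (space ?S - (\<Union>i. bad i))"
      using bad_sets by (intro S.prob_compl[symmetric]) auto
    also have "space ?S - (\<Union>i. bad i) = {\<omega> \<in> space ?S. \<forall>i. \<bar>empirical \<omega> T $ i - P $ i\<bar> < \<eta>}"
      by (auto simp: bad_def not_le dest: leD)
    finally show ?case .
  qed
qed simp

lemma dist_lt_of_coordinates_close:
  fixes p q :: "real^'d::finite"
  assumes "\<forall>i. \<bar>p $ i - q $ i\<bar> < \<eta>"
  shows "dist p q < real CARD('d) * \<eta>"
proof -
  have "dist p q \<le> (\<Sum>i\<in>UNIV. \<bar>(p - q) $ i\<bar>)"
    unfolding dist_norm by (rule norm_le_l1_cart)
  also have "\<dots> < (\<Sum>i\<in>(UNIV::'d set). \<eta>)"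
    using assms by (intro sum_strict_mono) auto
  finally show ?thesis
    by simp
qed

lemma regular_predictor_equicontinuous:
  assumes "regular_predictor X ch" "x \<in> X" "p \<in> prob_simplex" "\<epsilon> > 0"
  obtains \<delta> where "\<delta> > 0"
    "\<And>p' T. p' \<in> prob_simplex \<Longrightarrow> dist p' p < \<delta> \<Longrightarrow> T \<ge> 1 \<Longrightarrow> \<bar>ch x p T - ch x p' T\<bar> < \<epsilon>"
proof -
  have "\<forall>x\<in>X. \<forall>p\<in>prob_simplex. \<forall>\<epsilon>>0. \<exists>\<delta>>0. \<forall>x'\<in>X. \<forall>p'\<in>prob_simplex.
      dist (x', p') (x, p) < \<delta> \<longrightarrow> (\<forall>T\<ge>1. \<bar>ch x p T - ch x' p' T\<bar> < \<epsilon>)"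
    using assms(1) unfolding regular_predictor_def by blast
  then obtain \<delta> where "\<delta> > 0" and \<delta>: "\<forall>x'\<in>X. \<forall>p'\<in>prob_simplex.
      dist (x', p') (x, p) < \<delta> \<longrightarrow> (\<forall>T\<ge>1. \<bar>ch x p T - ch x' p' T\<bar> < \<epsilon>)"
    using assms(2-4) by blast
  then show ?thesis
    using that \<open>x \<in> X\<close> by (simp add: dist_Pair_Pair)
qed

lemma tendsto_zero_if_Limsup_scaled_log_neg:
  assumes "limsup (\<lambda>T. scaled_log (a T) (p T)) < 0"
    and a: "filterlim a at_top sequentially"
    and "\<And>T. p T \<ge> 0"
  shows "p \<longlonglongrightarrow> 0"
proof -
  obtain r where r: "limsup (\<lambda>T. scaled_log (a T) (p T)) < ereal r" "r < 0"
    using ereal_dense2[OF assms(1)] by auto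
  have "filterlim (\<lambda>T. r * a T) at_bot sequentially"
    using filterlim_tendsto_neg_mult_at_bot[OF tendsto_const \<open>r < 0\<close> a] .
  then have exp_tendsto: "(\<lambda>T. exp (r * a T)) \<longlonglongrightarrow> 0"
    by (rule filterlim_compose[OF exp_at_bot])
  have a_pos: "\<forall>\<^sub>F T in sequentially. a T > 0"
    using a by (simp add: filterlim_at_top_dense)
  have "\<forall>\<^sub>F T in sequentially. scaled_log (a T) (p T) < ereal r"
    by (rule Limsup_le_iff[THEN iffD1, OF order.refl, rule_format, OF r(1)])
  then have "\<forall>\<^sub>F T in sequentially. p T \<le> exp (r * a T)"
    using a_pos
  proof eventually_elim
    case (elim T)
    show ?case
    proof (cases "p T = 0")
      case False
      then have "ln (p T) < r * a T"
        using elim by (simp add: scaled_log_def pos_divide_less_eq)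
      then show ?thesis
        using False \<open>p T \<ge> 0\<close> by (metis exp_less_cancel_iff exp_ln less_imp_le order_le_less)
    qed simp
  qed
  then show ?thesis
    using assms(3) by (intro tendsto_sandwich[OF _ _ tendsto_const exp_tendsto]) auto
qed

lemma eventually_cost_lt_predictor:
  fixes P :: "real^'d::finite"
  assumes ch: "regular_predictor X ch" and "x \<in> X" and P: "P \<in> prob_simplex"
    and disappointment: "disappointment_prob l ch x P \<longlonglongrightarrow> 0"
    and "\<epsilon> > 0"
  shows "\<forall>\<^sub>F T in sequentially. cost l x P - \<epsilon> < ch x P T"
proof -
  let ?S = "stream_space (law P)"
  interpret S: prob_space ?S
    using prob_space_law[OF P] by (rule prob_space.prob_space_stream_space)
  obtain \<delta> where "\<delta> > 0" and \<delta>: "\<And>p' T. p' \<in> prob_simplex \<Longrightarrow> dist p' P < \<delta> \<Longrightarrow> T \<ge> 1 \<Longrightarrow>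
      \<bar>ch x P T - ch x p' T\<bar> < \<epsilon>"
    using regular_predictor_equicontinuous[OF ch \<open>x \<in> X\<close> P \<open>\<epsilon> > 0\<close>] by blast
  define good where "good T = {\<omega> \<in> space ?S. \<forall>i. \<bar>empirical \<omega> T $ i - P $ i\<bar> < \<delta> / CARD('d)}" for T
  have "(\<lambda>T. S.prob (good T)) \<longlonglongrightarrow> 1"
    unfolding good_def using \<open>\<delta> > 0\<close> by (intro empirical_concentration P) simp
  then have good_likely: "\<forall>\<^sub>F T in sequentially. S.prob (good T) > 1/2"
    by (rule order_tendstoD) simp
  have unlikely: "\<forall>\<^sub>F T in sequentially. disappointment_prob l ch x P T < 1/2"
    using disappointment by (rule order_tendstoD) simp
  show ?thesis
    using good_likely unlikely eventually_ge_at_top[of 1]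
  proof eventually_elim
    case (elim T)
    show ?case
    proof (rule ccontr)
      assume "\<not> cost l x P - \<epsilon> < ch x P T"
      have "good T \<subseteq> {\<omega> \<in> space ?S. cost l x P > ch x (empirical \<omega> T) T}"
      proof safe
        fix \<omega> assume "\<omega> \<in> good T"
        then have "dist (empirical \<omega> T) P < \<delta>"
          using dist_lt_of_coordinates_close[of "empirical \<omega> T" P "\<delta> / CARD('d)"] by (simp add: good_def)
        then have "\<bar>ch x P T - ch x (empirical \<omega> T) T\<bar> < \<epsilon>"
          using \<delta> empirical_in_prob_simplex elim by blast
        then show "cost l x P > ch x (empirical \<omega> T) T"
          using \<open>\<not> cost l x P - \<epsilon> < ch x P T\<close> by linarith
      qed (simp add: good_def)
      then have "S.prob (good T) \<le> disappointment_prob l ch x P T"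
        unfolding disappointment_prob_def by (intro S.finite_measure_mono sets_empirical_event)
      then show False
        using elim by linarith
    qed
  qed
qed

theorem mainTheorem10:
  fixes X :: "'x::euclidean_space set"
    and l :: "'x \<Rightarrow> 'd::finite \<Rightarrow> real"
    and ch :: "'x \<Rightarrow> real^'d \<Rightarrow> nat \<Rightarrow> real"
    and a :: "nat \<Rightarrow> real"
  assumes "CARD('d) \<ge> 2"
    and "compact X"
    and "\<forall>i. continuous_on X (\<lambda>x. l x i)"
    and "regular_predictor X ch"
    and "\<forall>T. a T > 0"
    and "filterlim a at_top sequentially"
    and "out_of_sample_guarantee X l ch a"
  shows "\<forall>P\<in>prob_simplex_ri. \<forall>x\<in>X.
           liminf (\<lambda>T. ereal (ch x P T - cost l x P)) \<ge> 0"
proof (intro ballI)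
  fix P :: "real^'d" and x assume "P \<in> prob_simplex_ri" "x \<in> X"
  then have P: "P \<in> prob_simplex"
    by (auto simp: prob_simplex_def prob_simplex_ri_def less_imp_le)
  have "limsup (\<lambda>T. scaled_log (a T) (disappointment_prob l ch x P T)) \<le> -1"
    using assms(7) \<open>P \<in> prob_simplex_ri\<close> \<open>x \<in> X\<close> unfolding out_of_sample_guarantee_def by blast
  also have "\<dots> < 0"
    by simp
  finally have disappointment: "disappointment_prob l ch x P \<longlonglongrightarrow> 0"
    using assms(6) by (rule tendsto_zero_if_Limsup_scaled_log_neg) (simp add: disappointment_prob_def)
  have above: "\<forall>\<^sub>F T in sequentially. - \<epsilon> < ch x P T - cost l x P" if "\<epsilon> > 0" for \<epsilon>
    using eventually_cost_lt_predictor[OF assms(4) \<open>x \<in> X\<close> P disappointment that]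
    by (rule eventually_mono) simp
  show "liminf (\<lambda>T. ereal (ch x P T - cost l x P)) \<ge> 0"
    unfolding le_Liminf_iff
  proof (intro allI impI)
    fix y :: ereal
    assume "y < 0"
    then show "\<forall>\<^sub>F T in sequentially. y < ereal (ch x P T - cost l x P)"
    proof (cases y)
      case (real r)
      then show ?thesis
        using above[of "- r"] \<open>y < 0\<close> by (auto elim: eventually_mono)
    qed auto
  qed
qed

end
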